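(* Let $\widehat{\mathbb P}$ be a nominal distribution as described in the context (determined by a probability vector $\widehat p\in\mathbb R_+^C$ and parameters $\widehat\theta_1,\dots,\widehat\theta_C\in\Theta$). For $\varepsilon\in\mathbb R_+$ and $\rho\in\mathbb R_+^C$ let $\mathbb B_{\varepsilon,\rho}(\widehat{\mathbb P})$ be the set of all probability measures $\mathbb Q$ on $\mathcal X\times\mathcal Y$ for which there exist $\mathbb Q_X\in\mathcal M(\mathcal X)$ and $\theta_1,\dots,\theta_C\in\Theta$ such that, writing $\mathbb Q_{Y|\widehat x_c}$ for the distribution with density $f(\cdot|\theta_c)$: (i) $\mathbb Q(\{\widehat x_c\}\times A)=\mathbb Q_X(\{\widehat x_c\})\,\mathbb Q_{Y|\widehat x_c}(A)$ for all $c$ and all measurable $A\subseteq\mathcal Y$; (ii) $\mathrm{KL}(\mathbb Q_{Y|\widehat x_c}\,\|\,\widehat{\mathbb P}_{Y|\widehat x_c})\le\rho_c$ for all $c$; (iii) $\mathrm{KL}(\mathbb Q_X\,\|\,\widehat{\mathbb P}_X)+\sum_{c=1}^C\rho_c\,\mathbb Q_X(\{\widehat x_c\})\le\varepsilon$. Let $\mathcal B_\varepsilon(\widehat{\mathbb P})$ be the set of all probability measures $\mathbb Q$ on $\mathcal X\times\mathcal Y$ for which there exist $\mathbb Q_X\in\mathcal M(\mathcal X)$ and $\theta_1,\dots,\theta_C\in\Theta$ satisfying (i) and $\mathrm{KL}(\mathbb Q\,\|\,\widehat{\mathbb P})\le\varepsilon$. Then for every $\varepsilon\in\mathbb R_+$,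 \[\mathcal B_\varepsilon(\widehat{\mathbb P})=\bigcup_{\rho\in\mathbb R_+^C}\mathbb B_{\varepsilon,\rho}(\widehat{\mathbb P}).\]
   Context: Exponential family: $\nu$ is a measure on $\mathcal Y\subseteq\mathbb R^m$, $h\ge 0$ and $T:\mathcal Y\to\mathbb R^p$ measurable; $f(y|\theta)=h(y)\exp(\langle\theta,T(y)\rangle-\Psi(\theta))$ is a density w.r.t. $\nu$, where $\Theta=\{\theta\in\mathbb R^p:\int h(y)e^{\langle\theta,T(y)\rangle}d\nu(y)<\infty\}$ and $\Psi(\theta)=\log\int h(y)e^{\langle\theta,T(y)\rangle}d\nu(y)$ (log-partition function). The family is regular: $\Theta$ is open and $T_1,\dots,T_p$ are affinely independent. $\mathcal X\subseteq\mathbb R^n$; $\widehat x_1,\dots,\widehat x_C\in\mathcal X$ are distinct points. A nominal distribution $\widehat{\mathbb P}$ is the probability measure on $\mathcal X\times\mathcal Y$ with marginal $\widehat{\mathbb P}_X=\sum_{c}\widehat p_c\delta_{\widehat x_c}$ and conditional distributions $\widehat{\mathbb P}_{Y|\widehat x_c}$ having density $f(\cdot|\widehat\theta_c)$, i.e. $\widehat{\mathbb P}(\{\widehat x_c\}\times A)=\widehat p_c\,\widehat{\mathbb P}_{Y|\widehat x_c}(A)$, where $\widehat p\in\mathbb R_+^C$ sums to 1 and $\widehat\theta_c\in\Theta$. $\mathcal M(S)$ denotes the probability measures on $S$. $\mathrm{KL}(\mathbb P_1\|\mathbb P_2)=\mathbb E_{\mathbb P_1}[\log(d\mathbb P_1/d\mathbb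 P_2)]$ if $\mathbb P_1\ll\mathbb P_2$ and $+\infty$ otherwise. *)

theory Defs
  imports "HOL-Probability.Probability"
begin

definition KL :: "'a measure \<Rightarrow> 'a measure \<Rightarrow> ereal" where
  "KL P1 P2 =
    (if sets P1 = sets P2 \<and> absolutely_continuous P2 P1 then
       (let r = (\<lambda>x. enn2real (RN_deriv P2 P1 x)) in
          enn2ereal (\<integral>\<^sup>+ x. ennreal (ln (r x)) \<partial>P1)
        - enn2ereal (\<integral>\<^sup>+ x. ennreal (- ln (r x)) \<partial>P1))
     else \<infinity>)"

definition Theta :: "'y measure \<Rightarrow> ('y \<Rightarrow> real) \<Rightarrow> ('y \<Rightarrow> 'p::euclidean_space) \<Rightarrow> 'p set" where
  "Theta nu h T = {\<theta>. (\<integral>\<^sup>+ y. ennreal (h y * exp (\<theta> \<bullet> T y)) \<partial>nu) < \<infinity>}"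

definition Psi :: "'y measure \<Rightarrow> ('y \<Rightarrow> real) \<Rightarrow> ('y \<Rightarrow> 'p::euclidean_space) \<Rightarrow> 'p \<Rightarrow> real" where
  "Psi nu h T \<theta> = ln (enn2real (\<integral>\<^sup>+ y. ennreal (h y * exp (\<theta> \<bullet> T y)) \<partial>nu))"

definition expfam_dens ::
  "'y measure \<Rightarrow> ('y \<Rightarrow> real) \<Rightarrow> ('y \<Rightarrow> 'p::euclidean_space) \<Rightarrow> 'p \<Rightarrow> 'y \<Rightarrow> real" where
  "expfam_dens nu h T \<theta> y = h y * exp (\<theta> \<bullet> T y - Psi nu h T \<theta>)"

definition expfam_dist ::
  "'y measure \<Rightarrow> ('y \<Rightarrow> real) \<Rightarrow> ('y \<Rightarrow> 'p::euclidean_space) \<Rightarrow> 'p \<Rightarrow> 'y measure" where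
  "expfam_dist nu h T \<theta> = density nu (\<lambda>y. ennreal (expfam_dens nu h T \<theta> y))"

definition affinely_indep_stat ::
  "'y measure \<Rightarrow> ('y \<Rightarrow> real) \<Rightarrow> ('y \<Rightarrow> 'p::euclidean_space) \<Rightarrow> bool" where
  "affinely_indep_stat nu h T \<longleftrightarrow>
     (\<forall>a b. a \<noteq> 0 \<longrightarrow> \<not> (AE y in density nu (\<lambda>y. ennreal (h y)). a \<bullet> T y = b))"

definition regular_expfam ::
  "'y measure \<Rightarrow> ('y \<Rightarrow> real) \<Rightarrow> ('y \<Rightarrow> 'p::euclidean_space) \<Rightarrow> bool" where
  "regular_expfam nu h T \<longleftrightarrow>
     h \<in> borel_measurable nu \<and> (\<forall>y\<in>space nu. 0 \<le> h y) \<and> T \<in> borel_measurable nu \<and>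
     open (Theta nu h T) \<and> affinely_indep_stat nu h T"

definition cond_decomp ::
  "'x measure \<Rightarrow> 'y measure \<Rightarrow> ('y \<Rightarrow> real) \<Rightarrow> ('y \<Rightarrow> 'p::euclidean_space) \<Rightarrow> nat \<Rightarrow> (nat \<Rightarrow> 'x)
    \<Rightarrow> ('x \<times> 'y) measure \<Rightarrow> 'x measure \<Rightarrow> (nat \<Rightarrow> 'p) \<Rightarrow> bool" where
  "cond_decomp MX nu h T C xh Q QX \<theta> \<longleftrightarrow>
     (\<forall>c<C. \<forall>A\<in>sets nu.
        emeasure Q ({xh c} \<times> A) = emeasure QX {xh c} * emeasure (expfam_dist nu h T (\<theta> c)) A)"

definition Bball ::
  "'x measure \<Rightarrow> 'y measure \<Rightarrow> ('y \<Rightarrow> real) \<Rightarrow> ('y \<Rightarrow> 'p::euclidean_space) \<Rightarrow> nat \<Rightarrow> (nat \<Rightarrow> 'x)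
    \<Rightarrow> ('x \<times> 'y) measure \<Rightarrow> (nat \<Rightarrow> 'p) \<Rightarrow> real \<Rightarrow> (nat \<Rightarrow> real) \<Rightarrow> ('x \<times> 'y) measure set" where
  "Bball MX nu h T C xh Ph \<theta>h \<epsilon> \<rho> =
     {Q. prob_space Q \<and> sets Q = sets (MX \<Otimes>\<^sub>M nu) \<and>
        (\<exists>QX \<theta>. prob_space QX \<and> sets QX = sets MX \<and> (\<forall>c<C. \<theta> c \<in> Theta nu h T) \<and>
           cond_decomp MX nu h T C xh Q QX \<theta> \<and>
           (\<forall>c<C. KL (expfam_dist nu h T (\<theta> c)) (expfam_dist nu h T (\<theta>h c)) \<le> ereal (\<rho> c)) \<and>
           KL QX (distr Ph MX fst) + ereal (\<Sum>c<C. \<rho> c * measure QX {xh c}) \<le> ereal \<epsilon>)}"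

definition KLball ::
  "'x measure \<Rightarrow> 'y measure \<Rightarrow> ('y \<Rightarrow> real) \<Rightarrow> ('y \<Rightarrow> 'p::euclidean_space) \<Rightarrow> nat \<Rightarrow> (nat \<Rightarrow> 'x)
    \<Rightarrow> ('x \<times> 'y) measure \<Rightarrow> real \<Rightarrow> ('x \<times> 'y) measure set" where
  "KLball MX nu h T C xh Ph \<epsilon> =
     {Q. prob_space Q \<and> sets Q = sets (MX \<Otimes>\<^sub>M nu) \<and>
        (\<exists>QX \<theta>. prob_space QX \<and> sets QX = sets MX \<and> (\<forall>c<C. \<theta> c \<in> Theta nu h T) \<and>
           cond_decomp MX nu h T C xh Q QX \<theta> \<and> KL Q Ph \<le> ereal \<epsilon>)}"

end

(* For Q satisfying the decomposition (i) and absolutely continuous w.r.t. the nominal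
   distribution P, both Q_X and Q are carried by the atoms x_c, and on the slice {x_c} x Y the
   density of Q w.r.t. P is (q_c / p_c) * dQ_{Y|x_c}/dP_{Y|x_c}, where q_c = Q_X({x_c}).
   Integrating its logarithm gives the chain rule
     KL(Q || P) = KL(Q_X || P_X) + sum_c q_c * KL(Q_{Y|x_c} || P_{Y|x_c}).
   If KL(Q || P) <= eps, then rho_c := KL(Q_{Y|x_c} || P_{Y|x_c}) is finite and Q lies in
   B_{eps,rho}; conversely, the bounds rho_c on the conditional divergences together with (iii)
   bound the right-hand side by eps. *)

theory Submission
  imports Defs
begin

section \<open>Arithmetic in the extended reals\<close>

lemma enn2ereal_fin: "x \<noteq> \<top> \<Longrightarrow> enn2ereal x = ereal (enn2real x)"
  by (cases x) auto

lemma enn2ereal_ennreal_diff: "enn2ereal (ennreal t) - enn2ereal (ennreal (- t)) = ereal t"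
  by (cases "0 \<le> t") (auto simp: ennreal_neg zero_ennreal.rep_eq)

lemma ennreal_mult_ratio:
  assumes "0 \<le> q" "0 < q \<Longrightarrow> 0 < p"
  shows "ennreal p * ennreal (q / p) = ennreal q"
proof (cases "q = 0")
  case False
  with assms have "0 < p" "0 < q" by auto
  then show ?thesis using ennreal_mult[of p "q / p"] by simp
qed simp

lemma ereal_add_diff_add:
  fixes a b c d :: ereal
  assumes "a \<noteq> -\<infinity>" "b \<noteq> -\<infinity>" "\<bar>c\<bar> \<noteq> \<infinity>" "\<bar>d\<bar> \<noteq> \<infinity>"
  shows "(a + b) - (c + d) = (a - c) + (b - d)"
  using assms by (cases a; cases b; cases c; cases d) auto

lemma ereal_sum_diff:
  fixes a b :: "'i \<Rightarrow> ereal"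
  assumes "finite I" "\<And>i. i \<in> I \<Longrightarrow> 0 \<le> a i" "\<And>i. i \<in> I \<Longrightarrow> 0 \<le> b i"
    and "(\<Sum>i\<in>I. b i) \<noteq> \<infinity>"
  shows "(\<Sum>i\<in>I. a i) - (\<Sum>i\<in>I. b i) = (\<Sum>i\<in>I. a i - b i)"
  using assms
proof (induction I rule: finite_induct)
  case (insert i I)
  then have "b i \<noteq> \<infinity>" "(\<Sum>i\<in>I. b i) \<noteq> \<infinity>" "0 \<le> (\<Sum>i\<in>I. a i)" "0 \<le> (\<Sum>i\<in>I. b i)"
    by (auto simp: sum_Pinfty intro: sum_nonneg)
  then show ?case using insert by (simp add: ereal_add_diff_add)
qed simp

lemma ereal_mult_diff:
  fixes x y :: ereal
  assumes "0 \<le> w" "0 \<le> x" "0 \<le> y" "ereal w * y \<noteq> \<infinity>"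
  shows "ereal w * x - ereal w * y = ereal w * (x - y)"
  using assms by (cases x; cases y; cases "w = 0") (auto simp: right_diff_distrib)

lemma enn2ereal_sum_diff:
  fixes w :: "'i \<Rightarrow> real" and x y :: "'i \<Rightarrow> ennreal"
  assumes I: "finite I" and w: "\<And>i. i \<in> I \<Longrightarrow> 0 \<le> w i"
    and y: "(\<Sum>i\<in>I. ennreal (w i) * y i) \<noteq> \<infinity>"
  shows "enn2ereal (\<Sum>i\<in>I. ennreal (w i) * x i) - enn2ereal (\<Sum>i\<in>I. ennreal (w i) * y i)
       = (\<Sum>i\<in>I. ereal (w i) * (enn2ereal (x i) - enn2ereal (y i)))"
proof -
  have eq: "enn2ereal (\<Sum>i\<in>I. ennreal (w i) * z i) = (\<Sum>i\<in>I. ereal (w i) * enn2ereal (z i))" for z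
    using w by (simp add: sum_enn2ereal[symmetric] times_ennreal.rep_eq)
  have "(\<Sum>i\<in>I. ereal (w i) * enn2ereal (y i)) \<noteq> \<infinity>"
    using y unfolding eq[symmetric] by simp
  then have "ereal (w i) * enn2ereal (y i) \<noteq> \<infinity>" if "i \<in> I" for i
    using that I w by (auto simp: sum_Pinfty)
  then show ?thesis
    unfolding eq using I w \<open>(\<Sum>i\<in>I. ereal (w i) * enn2ereal (y i)) \<noteq> \<infinity>\<close>
    by (simp add: ereal_sum_diff ereal_mult_diff)
qed

section \<open>Extended integrals and Kullback--Leibler divergence\<close>

definition ereal_integral :: "'a measure \<Rightarrow> ('a \<Rightarrow> real) \<Rightarrow> ereal" where
  "ereal_integral M f =
     enn2ereal (\<integral>\<^sup>+x. ennreal (f x) \<partial>M) - enn2ereal (\<integral>\<^sup>+x. ennreal (- f x) \<partial>M)"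

lemma ereal_integral_cong_AE:
  "AE x in M. f x = g x \<Longrightarrow> ereal_integral M f = ereal_integral M g"
  unfolding ereal_integral_def
  by (metis (mono_tags, lifting) AE_mp AE_I2 nn_integral_cong_AE)

lemma ereal_integral_eq_integral:
  assumes "integrable M f"
  shows "ereal_integral M f = ereal (\<integral>x. f x \<partial>M)"
proof -
  have "(\<integral>\<^sup>+x. ennreal (f x) \<partial>M) \<noteq> \<infinity>" "(\<integral>\<^sup>+x. ennreal (- f x) \<partial>M) \<noteq> \<infinity>"
    using assms unfolding real_integrable_def by auto
  then show ?thesis
    unfolding ereal_integral_def real_lebesgue_integral_def[OF assms] by (simp add: enn2ereal_fin)
qed

lemma nn_integral_le_shift:
  assumes "prob_space M" "g \<in> borel_measurable M"
  shows "(\<integral>\<^sup>+x. ennreal (g x) \<partial>M) \<le> (\<integral>\<^sup>+x. ennreal (b + g x) \<partial>M) + ennreal \<bar>b\<bar>"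
proof -
  interpret prob_space M by fact
  have "(\<integral>\<^sup>+x. ennreal (g x) \<partial>M) \<le> (\<integral>\<^sup>+x. ennreal (b + g x) + ennreal \<bar>b\<bar> \<partial>M)"
  proof (intro nn_integral_mono)
    fix x
    have "ennreal (g x) \<le> ennreal (max 0 (b + g x) + \<bar>b\<bar>)" by (intro ennreal_leI) auto
    also have "\<dots> = ennreal (b + g x) + ennreal \<bar>b\<bar>"
      by (subst ennreal_plus) (auto simp: max_def ennreal_neg)
    finally show "ennreal (g x) \<le> ennreal (b + g x) + ennreal \<bar>b\<bar>" .
  qed
  also have "\<dots> = (\<integral>\<^sup>+x. ennreal (b + g x) \<partial>M) + ennreal \<bar>b\<bar>"
    using assms by (subst nn_integral_add) (auto simp: emeasure_space_1)
  finally show ?thesis .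
qed

lemma ereal_integral_add_const:
  assumes M: "prob_space M" and f: "f \<in> borel_measurable M"
    and neg: "(\<integral>\<^sup>+x. ennreal (- f x) \<partial>M) < \<infinity>"
  shows "ereal_integral M (\<lambda>x. a + f x) = ereal a + ereal_integral M f"
proof -
  interpret prob_space M by fact
  have "(\<integral>\<^sup>+x. ennreal (- (a + f x)) \<partial>M) \<le> (\<integral>\<^sup>+x. ennreal (- f x) \<partial>M) + ennreal \<bar>a\<bar>"
    using nn_integral_le_shift[OF M, of "\<lambda>x. - (a + f x)" a] f by simp
  also have "\<dots> < \<infinity>" using neg by (simp add: less_top)
  finally have neg': "(\<integral>\<^sup>+x. ennreal (- (a + f x)) \<partial>M) < \<infinity>" .
  show ?thesis
  proof (cases "(\<integral>\<^sup>+x. ennreal (f x) \<partial>M) = \<infinity>")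
    case True
    moreover have "(\<integral>\<^sup>+x. ennreal (f x) \<partial>M) \<le> (\<integral>\<^sup>+x. ennreal (a + f x) \<partial>M) + ennreal \<bar>a\<bar>"
      using nn_integral_le_shift[OF M f] .
    ultimately have "(\<integral>\<^sup>+x. ennreal (a + f x) \<partial>M) = \<infinity>" by (auto simp: top_unique)
    then show ?thesis using True neg neg' unfolding ereal_integral_def by (simp add: less_top)
  next
    case False
    then have "integrable M f" using neg f unfolding real_integrable_def by (simp add: less_top)
    then show ?thesis by (simp add: ereal_integral_eq_integral prob_space)
  qed
qed

lemma KL_density:
  assumes P2: "prob_space P2" and sets: "sets P1 = sets P2"
    and r: "r \<in> borel_measurable P2" and P1: "P1 = density P2 r"
  shows "KL P1 P2 = ereal_integral P1 (\<lambda>x. ln (enn2real (r x)))"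
proof -
  interpret prob_space P2 by fact
  have ac: "absolutely_continuous P2 P1" using P1 r absolutely_continuousI_density by blast
  have "AE x in P2. r x = RN_deriv P2 P1 x" using RN_deriv_unique[OF r P1[symmetric]] .
  then have "AE x in P1. r x = RN_deriv P2 P1 x" using absolutely_continuous_AE[OF sets ac] by blast
  then have "AE x in P1. ln (enn2real (RN_deriv P2 P1 x)) = ln (enn2real (r x))"
    by eventually_elim simp
  then show ?thesis
    unfolding KL_def using sets ac ereal_integral_cong_AE
    by (simp add: Let_def ereal_integral_def[symmetric])
qed

lemma diff_1_le_mult_ln:
  fixes t :: real
  assumes "0 \<le> t"
  shows "t - 1 \<le> t * ln t"
proof (cases "t = 0")
  case False
  with assms have "t * ln (1 / t) \<le> t * (1 / t - 1)"
    by (intro mult_left_mono ln_le_minus_one) auto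
  with False assms show ?thesis by (simp add: ln_div right_diff_distrib)
qed simp

lemma nn_integral_neg_ln_density_le_1:
  assumes "prob_space P" and r: "r \<in> borel_measurable P"
  shows "(\<integral>\<^sup>+x. ennreal (- ln (enn2real (r x))) \<partial>density P r) \<le> 1"
proof -
  interpret prob_space P by fact
  have "r x * ennreal (- ln (enn2real (r x))) \<le> 1" for x
  proof (cases "r x")
    case (real t)
    then have "r x * ennreal (- ln (enn2real (r x))) = ennreal (t * - ln t)"
      using ennreal_mult'[of t "- ln t"] by simp
    moreover have "t * - ln t \<le> 1" using real diff_1_le_mult_ln[of t] by linarith
    ultimately show ?thesis by simp
  qed simp
  then have "(\<integral>\<^sup>+x. r x * ennreal (- ln (enn2real (r x))) \<partial>P) \<le> (\<integral>\<^sup>+x. 1 \<partial>P)"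
    by (intro nn_integral_mono)
  then show ?thesis using r by (simp add: nn_integral_density emeasure_space_1)
qed

lemma ereal_integral_ln_density_nonneg:
  fixes d :: "'a \<Rightarrow> real"
  assumes "prob_space P" and Pd: "prob_space (density P d)"
    and d[measurable]: "d \<in> borel_measurable P" and d0: "\<And>x. 0 \<le> d x"
  shows "0 \<le> ereal_integral (density P d) (\<lambda>x. ln (d x))"
proof -
  interpret prob_space P by fact
  interpret Pd: prob_space "density P d" by fact
  have neg: "(\<integral>\<^sup>+x. ennreal (- ln (d x)) \<partial>density P d) < \<infinity>"
    using nn_integral_neg_ln_density_le_1[OF \<open>prob_space P\<close>, of "\<lambda>x. ennreal (d x)"] d0
    by (simp add: le_less_trans)
  show ?thesis
  proof (cases "(\<integral>\<^sup>+x. ennreal (ln (d x)) \<partial>density P d) = \<infinity>")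
    case True
    then show ?thesis using neg unfolding ereal_integral_def by (simp add: less_top)
  next
    case False
    then have "integrable (density P d) (\<lambda>x. ln (d x))"
      using neg unfolding real_integrable_def by (simp add: less_top)
    then have int_dlnd: "integrable P (\<lambda>x. d x * ln (d x))"
      using d0 by (simp add: integrable_density)
    have "integrable P (\<lambda>x. d x *\<^sub>R (1::real))"
      using Pd.integrable_const[of "1::real"] d0 by (subst (asm) integrable_density) auto
    then have int_d: "integrable P d" by simp
    have "(\<integral>x. 1 \<partial>density P d) = (\<integral>x. d x \<partial>P)"
      using d0 by (subst integral_density) auto
    then have "0 = (\<integral>x. d x - 1 \<partial>P)"
      using int_d Pd.prob_space by (simp add: prob_space)
    also have "\<dots> \<le> (\<integral>x. d x * ln (d x) \<partial>P)"
    proof (intro integral_mono int_dlnd)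
      show "integrable P (\<lambda>x. d x - 1)" using int_d by auto
      show "d x - 1 \<le> d x * ln (d x)" for x
        by (rule diff_1_le_mult_ln[OF d0])
    qed
    also have "\<dots> = (\<integral>x. ln (d x) \<partial>density P d)"
      using d0 by (simp add: integral_density)
    finally show ?thesis
      using \<open>integrable (density P d) _\<close> by (simp add: ereal_integral_eq_integral)
  qed
qed

lemma KL_nonneg:
  assumes P1: "prob_space P1" and P2: "prob_space P2" and sets: "sets P1 = sets P2"
    and ac: "absolutely_continuous P2 P1"
  shows "0 \<le> KL P1 P2"
proof -
  interpret P1: prob_space P1 by fact
  interpret P2: prob_space P2 by fact
  obtain d where d[measurable]: "d \<in> borel_measurable P2"
      and RN: "AE x in P2. RN_deriv P2 P1 x = ennreal (d x)" and d0: "\<And>x. 0 \<le> d x"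
    using P2.real_RN_deriv[OF P1.finite_measure_axioms ac sets] by blast
  have "P1 = density P2 (RN_deriv P2 P1)"
    using P2.density_RN_deriv[OF ac sets] by simp
  also have "\<dots> = density P2 (\<lambda>x. ennreal (d x))"
    using RN by (intro density_cong) auto
  finally have P1_eq: "P1 = density P2 (\<lambda>x. ennreal (d x))" .
  have "KL P1 P2 = ereal_integral P1 (\<lambda>x. ln (d x))"
    using KL_density[OF P2 sets _ P1_eq] d0 by simp
  then show ?thesis
    using ereal_integral_ln_density_nonneg[OF P2 _ d d0] P1 P1_eq by simp
qed

lemma KL_self:
  assumes "prob_space M"
  shows "KL M M = 0"
  using KL_density[OF assms refl, of "\<lambda>_. 1"] by (simp add: density_1 ereal_integral_def)

lemma KL_finiteD:
  assumes "KL P1 P2 \<noteq> \<infinity>"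
  shows "sets P1 = sets P2" and "absolutely_continuous P2 P1"
  using assms unfolding KL_def by (auto split: if_splits)

lemma nn_integral_scaled_density:
  assumes Q: "Q = density P R" and R: "R \<in> borel_measurable P" and f: "f \<in> borel_measurable P"
    and q: "0 \<le> q" and p: "0 < p"
  shows "ennreal p * (\<integral>\<^sup>+y. ennreal (q / p) * R y * f y \<partial>P) = ennreal q * (\<integral>\<^sup>+y. f y \<partial>Q)"
proof -
  have "(\<integral>\<^sup>+y. ennreal (q / p) * R y * f y \<partial>P) = ennreal (q / p) * (\<integral>\<^sup>+y. R y * f y \<partial>P)"
    using R f by (simp add: mult.assoc nn_integral_cmult)
  also have "(\<integral>\<^sup>+y. R y * f y \<partial>P) = (\<integral>\<^sup>+y. f y \<partial>Q)"
    using R f by (simp add: Q nn_integral_density)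
  finally show ?thesis
    using ennreal_mult_ratio[OF q, of p] p by (simp add: mult.assoc[symmetric])
qed

lemma ereal_integral_ln_scaled_density:
  assumes P: "prob_space P" and Q: "prob_space Q" and sets: "sets Q = sets P"
    and R[measurable]: "R \<in> borel_measurable P" and Q_eq: "Q = density P R" and a: "0 < a"
  shows "ereal_integral Q (\<lambda>y. ln (enn2real (ennreal a * R y))) = ereal (ln a) + KL Q P"
proof -
  interpret P: prob_space P by fact
  interpret Q: prob_space Q by fact
  have "(\<integral>\<^sup>+y. R y \<partial>P) = emeasure Q (space Q)"
    by (simp add: Q_eq emeasure_density)
  then have "AE y in P. R y \<noteq> \<infinity>"
    by (intro nn_integral_PInf_AE) (auto simp: Q.emeasure_space_1)
  then have "AE y in Q. 0 < R y \<and> R y \<noteq> \<infinity>"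
    unfolding Q_eq by (subst AE_density) (auto elim: AE_mp)
  then have "AE y in Q. ln (enn2real (ennreal a * R y)) = ln a + ln (enn2real (R y))"
    by eventually_elim (use a in \<open>auto simp: enn2real_mult ln_mult enn2real_eq_0_iff\<close>)
  then have "ereal_integral Q (\<lambda>y. ln (enn2real (ennreal a * R y)))
      = ereal_integral Q (\<lambda>y. ln a + ln (enn2real (R y)))"
    by (rule ereal_integral_cong_AE)
  also have "\<dots> = ereal (ln a) + ereal_integral Q (\<lambda>y. ln (enn2real (R y)))"
    using nn_integral_neg_ln_density_le_1[OF P R] Q_eq sets
    by (intro ereal_integral_add_const[OF Q]) (auto simp: le_less_trans)
  also have "ereal_integral Q (\<lambda>y. ln (enn2real (R y))) = KL Q P"
    by (rule KL_density[OF P sets R Q_eq, symmetric])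
  finally show ?thesis .
qed

lemma expfam_dist_sets [simp]: "sets (expfam_dist nu h T \<theta>) = sets nu"
  unfolding expfam_dist_def by simp

lemma space_expfam_dist [simp]: "space (expfam_dist nu h T \<theta>) = space nu"
  unfolding expfam_dist_def by simp

lemma prob_space_expfam_dist:
  fixes T :: "'y \<Rightarrow> 'p::euclidean_space"
  assumes reg: "regular_expfam nu h T" and \<theta>: "\<theta> \<in> Theta nu h T"
  shows "prob_space (expfam_dist nu h T \<theta>)"
proof -
  have [measurable]: "h \<in> borel_measurable nu" "T \<in> borel_measurable nu"
    and h0: "\<And>y. y \<in> space nu \<Longrightarrow> 0 \<le> h y" and indep: "affinely_indep_stat nu h T"
    using reg unfolding regular_expfam_def by auto
  define Z where "Z = (\<integral>\<^sup>+ y. ennreal (h y * exp (\<theta> \<bullet> T y)) \<partial>nu)"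
  have "Z \<noteq> 0"
  proof
    assume "Z = 0"
    then have "AE y in nu. ennreal (h y * exp (\<theta> \<bullet> T y)) = 0"
      unfolding Z_def by (simp add: nn_integral_0_iff_AE)
    then have "AE y in nu. h y = 0"
      using AE_space by eventually_elim (auto simp: ennreal_eq_0_iff mult_le_0_iff intro: order.antisym h0)
    then have "AE y in density nu (\<lambda>y. ennreal (h y)). b \<bullet> T y = 0" for b :: 'p
      by (subst AE_density) (auto elim: AE_mp)
    moreover obtain b :: 'p where "b \<noteq> 0"
      using nonzero_Basis nonempty_Basis by blast
    ultimately show False using indep unfolding affinely_indep_stat_def by blast
  qed
  moreover have "Z < \<infinity>" using \<theta> unfolding Theta_def Z_def by simp
  ultimately obtain z where z: "Z = ennreal z" "0 < z"
    by (cases Z) (auto simp: ennreal_eq_0_iff)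
  then have Psi: "Psi nu h T \<theta> = ln z" unfolding Psi_def Z_def[symmetric] by simp
  have "emeasure (expfam_dist nu h T \<theta>) (space (expfam_dist nu h T \<theta>))
      = (\<integral>\<^sup>+ y. ennreal (h y * exp (\<theta> \<bullet> T y)) * ennreal (1 / z) \<partial>nu)"
    unfolding expfam_dist_def expfam_dens_def Psi using z
    by (auto simp: emeasure_density exp_diff ennreal_mult''[symmetric] intro!: nn_integral_cong)
  also have "\<dots> = Z * ennreal (1 / z)"
    unfolding Z_def by (rule nn_integral_multc) measurable
  also have "\<dots> = 1"
    using z by (simp add: ennreal_mult''[symmetric])
  finally show ?thesis by (rule prob_spaceI)
qed

section \<open>Mixtures over finitely many atoms\<close>

lemma prob_space_emeasure_eq_measure: "prob_space M \<Longrightarrow> emeasure M A = ennreal (measure M A)"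
  by (simp add: prob_space_def finite_measure.emeasure_eq_measure)

lemma nn_integral_finite_cover:
  assumes I: "finite I" and disj: "disjoint_family_on S I" and S: "\<And>i. i \<in> I \<Longrightarrow> S i \<in> sets M"
    and cover: "AE x in M. x \<in> (\<Union>i\<in>I. S i)" and f: "f \<in> borel_measurable M"
  shows "(\<integral>\<^sup>+x. f x \<partial>M) = (\<Sum>i\<in>I. \<integral>\<^sup>+x. f x * indicator (S i) x \<partial>M)"
proof -
  have "AE x in M. f x = (\<Sum>i\<in>I. f x * indicator (S i) x)"
    using cover by eventually_elim (auto intro: sum_indicator_disjoint_family[OF disj, symmetric] I)
  then have "(\<integral>\<^sup>+x. f x \<partial>M) = (\<integral>\<^sup>+x. (\<Sum>i\<in>I. f x * indicator (S i) x) \<partial>M)"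
    by (rule nn_integral_cong_AE)
  also have "\<dots> = (\<Sum>i\<in>I. \<integral>\<^sup>+x. f x * indicator (S i) x \<partial>M)"
    using S f by (intro nn_integral_sum) auto
  finally show ?thesis .
qed

lemma nn_integral_slice:
  fixes M :: "('x \<times> 'y) measure"
  assumes M: "sets M = sets (MX \<Otimes>\<^sub>M nu)" and x: "{x} \<in> sets MX" and N: "sets N = sets nu"
    and slice: "\<And>A. A \<in> sets nu \<Longrightarrow> emeasure M ({x} \<times> A) = m * emeasure N A"
    and F: "F \<in> borel_measurable (MX \<Otimes>\<^sub>M nu)"
  shows "(\<integral>\<^sup>+z. F z * indicator ({x} \<times> space nu) z \<partial>M) = m * (\<integral>\<^sup>+y. F (x, y) \<partial>N)"
proof -
  let ?S = "{x} \<times> space nu"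
  have x_space: "x \<in> space MX" using sets.sets_into_space[OF x] by simp
  have S: "?S \<in> sets M" unfolding M using x by (intro pair_measureI) auto
  have [measurable]: "(\<lambda>y. F (x, y)) \<in> borel_measurable nu" using F x_space by measurable
  have snd_M: "snd \<in> measurable M nu" by (subst measurable_cong_sets[OF M refl]) simp
  then have snd: "snd \<in> measurable (density M (indicator ?S)) nu" by simp
  have "(\<integral>\<^sup>+z. F z * indicator ?S z \<partial>M) = (\<integral>\<^sup>+z. indicator ?S z * F (x, snd z) \<partial>M)"
    by (intro nn_integral_cong) (auto simp: indicator_def)
  also have "\<dots> = (\<integral>\<^sup>+y. F (x, y) \<partial>distr (density M (indicator ?S)) nu snd)"
    using S snd measurable_cong_sets[OF M refl] by (simp add: nn_integral_density nn_integral_distr)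
  also have "distr (density M (indicator ?S)) nu snd = density N (\<lambda>_. m)"
  proof (rule measure_eqI)
    fix A assume "A \<in> sets (distr (density M (indicator ?S)) nu snd)"
    then have A: "A \<in> sets nu" by simp
    have pre: "snd -` A \<inter> space M \<in> sets M" using snd_M A by (rule measurable_sets)
    have "emeasure (distr (density M (indicator ?S)) nu snd) A
        = (\<integral>\<^sup>+z. indicator ?S z * indicator (snd -` A \<inter> space M) z \<partial>M)"
      using snd A pre S by (simp add: emeasure_distr emeasure_density)
    also have "\<dots> = (\<integral>\<^sup>+z. indicator ({x} \<times> A) z \<partial>M)"
      using sets.sets_into_space[OF A] x_space sets_eq_imp_space_eq[OF M]
      by (intro nn_integral_cong) (auto simp: space_pair_measure split: split_indicator)
    also have "\<dots> = m * emeasure N A"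
      using A x M slice by (simp add: nn_integral_indicator)
    finally show "emeasure (distr (density M (indicator ?S)) nu snd) A = emeasure (density N (\<lambda>_. m)) A"
      using A N by (simp add: emeasure_density nn_integral_cmult_indicator)
  qed (use N in simp)
  also have "(\<integral>\<^sup>+y. F (x, y) \<partial>density N (\<lambda>_. m)) = m * (\<integral>\<^sup>+y. F (x, y) \<partial>N)"
  proof -
    have "(\<lambda>y. F (x, y)) \<in> borel_measurable N" by (subst measurable_cong_sets[OF N refl]) simp
    then show ?thesis by (simp add: nn_integral_density nn_integral_cmult)
  qed
  finally show ?thesis .
qed

lemma (in prob_space) AE_finite_cover_iff:
  assumes "finite I" "disjoint_family_on S I" "\<And>i. i \<in> I \<Longrightarrow> S i \<in> events"
  shows "(AE x in M. x \<in> (\<Union>i\<in>I. S i)) \<longleftrightarrow> (\<Sum>i\<in>I. emeasure M (S i)) = 1"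
proof -
  have U: "(\<Union>i\<in>I. S i) \<in> events" using assms by auto
  have "(AE x in M. x \<in> (\<Union>i\<in>I. S i)) \<longleftrightarrow> emeasure M (\<Union>i\<in>I. S i) = 1"
    using AE_in_set_eq_1[OF U] by (simp add: emeasure_eq_measure)
  also have "emeasure M (\<Union>i\<in>I. S i) = (\<Sum>i\<in>I. emeasure M (S i))"
    using assms by (intro sum_emeasure[symmetric]) auto
  finally show ?thesis .
qed

locale finite_atoms =
  fixes MX :: "'x measure" and nu :: "'y measure" and C :: nat and xh :: "nat \<Rightarrow> 'x"
  assumes atom_sets: "c < C \<Longrightarrow> {xh c} \<in> sets MX"
    and inj_atoms: "inj_on xh {..<C}"
begin

lemma atom_space: "c < C \<Longrightarrow> xh c \<in> space MX"
  using sets.sets_into_space[OF atom_sets] by blast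

lemma slice_sets: "c < C \<Longrightarrow> A \<in> sets nu \<Longrightarrow> {xh c} \<times> A \<in> sets (MX \<Otimes>\<^sub>M nu)"
  using atom_sets by (intro pair_measureI) auto

lemma disjoint_atoms: "disjoint_family_on (\<lambda>c. {xh c}) {..<C}"
  using inj_atoms by (auto simp: disjoint_family_on_def inj_on_def)

lemma disjoint_slices: "disjoint_family_on (\<lambda>c. {xh c} \<times> space nu) {..<C}"
  using inj_atoms by (auto simp: disjoint_family_on_def inj_on_def)

lemma sum_indicator_atom:
  fixes f :: "nat \<Rightarrow> 'a::semiring_1"
  assumes "c < C"
  shows "(\<Sum>c'<C. f c' * indicator {xh c'} (xh c)) = f c"
  using sum_indicator_disjoint_family[OF disjoint_atoms, of "xh c" c f] assms by simp

definition atomic :: "(nat \<Rightarrow> real) \<Rightarrow> 'x measure \<Rightarrow> bool" where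
  "atomic q M \<longleftrightarrow> sets M = sets MX \<and> (\<forall>c<C. 0 \<le> q c \<and> emeasure M {xh c} = ennreal (q c)) \<and>
     (AE x in M. x \<in> xh ` {..<C})"

definition mixture :: "(nat \<Rightarrow> real) \<Rightarrow> (nat \<Rightarrow> 'y measure) \<Rightarrow> ('x \<times> 'y) measure \<Rightarrow> bool" where
  "mixture q Mc M \<longleftrightarrow> sets M = sets (MX \<Otimes>\<^sub>M nu) \<and>
     (\<forall>c<C. 0 \<le> q c \<and> prob_space (Mc c) \<and> sets (Mc c) = sets nu \<and>
        (\<forall>A\<in>sets nu. emeasure M ({xh c} \<times> A) = ennreal (q c) * emeasure (Mc c) A)) \<and>
     (AE z in M. fst z \<in> xh ` {..<C})"

lemma AE_atoms_iff:
  assumes "prob_space M" "sets M = sets MX"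
  shows "(AE x in M. x \<in> xh ` {..<C}) \<longleftrightarrow> (\<Sum>c<C. emeasure M {xh c}) = 1"
proof -
  have "xh ` {..<C} = (\<Union>c<C. {xh c})" by auto
  then show ?thesis
    using prob_space.AE_finite_cover_iff[OF assms(1) _ disjoint_atoms] atom_sets assms(2) by simp
qed

lemma AE_fst_atoms_iff_slices:
  assumes "sets M = sets (MX \<Otimes>\<^sub>M nu)"
  shows "(AE z in M. fst z \<in> xh ` {..<C}) \<longleftrightarrow> (AE z in M. z \<in> (\<Union>c<C. {xh c} \<times> space nu))"
  by (rule AE_cong) (auto simp: sets_eq_imp_space_eq[OF assms] space_pair_measure)

lemma AE_slices_iff:
  assumes M: "prob_space M" and sets: "sets M = sets (MX \<Otimes>\<^sub>M nu)"
  shows "(AE z in M. fst z \<in> xh ` {..<C}) \<longleftrightarrow> (\<Sum>c<C. emeasure M ({xh c} \<times> space nu)) = 1"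
  unfolding AE_fst_atoms_iff_slices[OF sets] using slice_sets sets
  by (intro prob_space.AE_finite_cover_iff[OF M _ disjoint_slices]) auto

lemma nn_integral_atomic:
  assumes M: "atomic q M" and G: "G \<in> borel_measurable MX"
  shows "(\<integral>\<^sup>+x. G x \<partial>M) = (\<Sum>c<C. ennreal (q c) * G (xh c))"
proof -
  have sets: "sets M = sets MX" using M by (simp add: atomic_def)
  have "(\<integral>\<^sup>+x. G x \<partial>M) = (\<Sum>c<C. \<integral>\<^sup>+x. G x * indicator {xh c} x \<partial>M)"
    using M atom_sets G sets
    by (intro nn_integral_finite_cover[OF _ disjoint_atoms]) (auto simp: atomic_def)
  also have "\<dots> = (\<Sum>c<C. \<integral>\<^sup>+x. G (xh c) * indicator {xh c} x \<partial>M)"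
    by (intro sum.cong nn_integral_cong) (auto split: split_indicator)
  also have "\<dots> = (\<Sum>c<C. ennreal (q c) * G (xh c))"
    using M atom_sets sets by (intro sum.cong) (auto simp: atomic_def nn_integral_cmult_indicator mult.commute)
  finally show ?thesis .
qed

lemma nn_integral_mixture:
  assumes M: "mixture q Mc M" and F: "F \<in> borel_measurable (MX \<Otimes>\<^sub>M nu)"
  shows "(\<integral>\<^sup>+z. F z \<partial>M) = (\<Sum>c<C. ennreal (q c) * (\<integral>\<^sup>+y. F (xh c, y) \<partial>Mc c))"
proof -
  have sets: "sets M = sets (MX \<Otimes>\<^sub>M nu)" using M by (simp add: mixture_def)
  have "AE z in M. z \<in> (\<Union>c<C. {xh c} \<times> space nu)"
    using M unfolding mixture_def AE_fst_atoms_iff_slices[OF sets] by simp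
  then have "(\<integral>\<^sup>+z. F z \<partial>M) = (\<Sum>c<C. \<integral>\<^sup>+z. F z * indicator ({xh c} \<times> space nu) z \<partial>M)"
    using slice_sets F sets
    by (intro nn_integral_finite_cover[OF _ disjoint_slices]) (auto simp: measurable_cong_sets[OF sets refl])
  also have "\<dots> = (\<Sum>c<C. ennreal (q c) * (\<integral>\<^sup>+y. F (xh c, y) \<partial>Mc c))"
    using M atom_sets F by (intro sum.cong refl nn_integral_slice[OF sets]) (auto simp: mixture_def)
  finally show ?thesis .
qed

lemma ereal_integral_atomic:
  assumes M: "atomic q M" and g: "g \<in> borel_measurable MX"
  shows "ereal_integral M g = ereal (\<Sum>c<C. q c * g (xh c))"
proof -
  have q: "\<And>c. c \<in> {..<C} \<Longrightarrow> 0 \<le> q c" using M by (simp add: atomic_def)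
  have "(\<lambda>x. ennreal (g x)) \<in> borel_measurable MX" "(\<lambda>x. ennreal (- g x)) \<in> borel_measurable MX"
    using g by measurable
  note integrals = this[THEN nn_integral_atomic[OF M]]
  have "ereal_integral M g
      = (\<Sum>c<C. ereal (q c) * (enn2ereal (ennreal (g (xh c))) - enn2ereal (ennreal (- g (xh c)))))"
    unfolding ereal_integral_def integrals using q
    by (intro enn2ereal_sum_diff) (auto simp: ennreal_mult_eq_top_iff)
  then show ?thesis by (simp add: enn2ereal_ennreal_diff)
qed

lemma ereal_integral_mixture:
  assumes M: "mixture q Mc M" and F[measurable]: "F \<in> borel_measurable (MX \<Otimes>\<^sub>M nu)"
    and neg: "(\<integral>\<^sup>+z. ennreal (- F z) \<partial>M) \<noteq> \<infinity>"
  shows "ereal_integral M F = (\<Sum>c<C. ereal (q c) * ereal_integral (Mc c) (\<lambda>y. F (xh c, y)))"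
proof -
  have q: "\<And>c. c \<in> {..<C} \<Longrightarrow> 0 \<le> q c" using M by (simp add: mixture_def)
  have "(\<lambda>z. ennreal (F z)) \<in> borel_measurable (MX \<Otimes>\<^sub>M nu)"
    "(\<lambda>z. ennreal (- F z)) \<in> borel_measurable (MX \<Otimes>\<^sub>M nu)" by measurable
  note integrals = this[THEN nn_integral_mixture[OF M]]
  show ?thesis
    using neg q unfolding ereal_integral_def integrals by (intro enn2ereal_sum_diff) auto
qed

text \<open>Where \<open>p c = 0\<close> the weight \<open>q c / p c\<close> is \<open>0\<close> by the convention \<open>x / 0 = 0\<close>;
  the lemmas below only use it where \<open>0 < q c\<close> forces \<open>0 < p c\<close>.\<close>

definition atom_density :: "(nat \<Rightarrow> real) \<Rightarrow> (nat \<Rightarrow> real) \<Rightarrow> 'x \<Rightarrow> ennreal" where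
  "atom_density q p x = (\<Sum>c<C. ennreal (q c / p c) * indicator {xh c} x)"

lemma atom_density_measurable [measurable]: "atom_density q p \<in> borel_measurable MX"
  unfolding atom_density_def[abs_def]
  by (intro borel_measurable_sum borel_measurable_times_ennreal borel_measurable_const
      borel_measurable_indicator atom_sets) simp

lemma atom_density_atom: "c < C \<Longrightarrow> atom_density q p (xh c) = ennreal (q c / p c)"
  unfolding atom_density_def by (rule sum_indicator_atom)

lemma atomic_eq_density:
  assumes P: "atomic p P" and Q: "atomic q Q" and pos: "\<And>c. c < C \<Longrightarrow> 0 < q c \<Longrightarrow> 0 < p c"
  shows "Q = density P (atom_density q p)"
proof (rule measure_eqI)
  have sets: "sets P = sets MX" "sets Q = sets MX" using P Q by (auto simp: atomic_def)
  then show "sets Q = sets (density P (atom_density q p))" by simp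
  fix A assume "A \<in> sets Q"
  then have A: "A \<in> sets MX" using sets by simp
  have "emeasure Q A = (\<Sum>c<C. ennreal (q c) * indicator A (xh c))"
    using nn_integral_atomic[OF Q, of "indicator A"] A sets by simp
  also have "\<dots> = (\<Sum>c<C. ennreal (p c) * (atom_density q p (xh c) * indicator A (xh c)))"
  proof (intro sum.cong refl)
    fix c assume "c \<in> {..<C}"
    then have c: "c < C" by simp
    have "ennreal (p c) * ennreal (q c / p c) = ennreal (q c)"
      using P Q pos c by (intro ennreal_mult_ratio) (auto simp: atomic_def)
    then show "ennreal (q c) * indicator A (xh c) = ennreal (p c) * (atom_density q p (xh c) * indicator A (xh c))"
      by (simp only: atom_density_atom[OF c] mult.assoc[symmetric])
  qed
  also have "\<dots> = emeasure (density P (atom_density q p)) A"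
    using nn_integral_atomic[OF P, of "\<lambda>x. atom_density q p x * indicator A x"] A sets
    by (simp add: emeasure_density measurable_cong_sets[OF sets(1) refl])
  finally show "emeasure Q A = emeasure (density P (atom_density q p)) A" .
qed

lemma KL_atomic:
  assumes P: "prob_space P" "atomic p P" and Q: "atomic q Q"
    and pos: "\<And>c. c < C \<Longrightarrow> 0 < q c \<Longrightarrow> 0 < p c"
  shows "KL Q P = ereal (\<Sum>c<C. q c * ln (q c / p c))"
proof -
  have sets: "sets Q = sets P" "sets P = sets MX" using P Q by (auto simp: atomic_def)
  have "KL Q P = ereal_integral Q (\<lambda>x. ln (enn2real (atom_density q p x)))"
    using sets atomic_eq_density[OF P(2) Q pos]
    by (intro KL_density[OF P(1)]) (simp_all add: measurable_cong_sets[OF sets(2) refl])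
  also have "\<dots> = ereal (\<Sum>c<C. q c * ln (enn2real (atom_density q p (xh c))))"
    by (rule ereal_integral_atomic[OF Q]) measurable
  also have "\<dots> = ereal (\<Sum>c<C. q c * ln (q c / p c))"
    using P Q by (auto simp: atomic_def atom_density_atom intro!: sum.cong)
  finally show ?thesis .
qed

definition slice_density ::
  "(nat \<Rightarrow> real) \<Rightarrow> (nat \<Rightarrow> real) \<Rightarrow> (nat \<Rightarrow> 'y \<Rightarrow> ennreal) \<Rightarrow> 'x \<times> 'y \<Rightarrow> ennreal" where
  "slice_density q p R z = (\<Sum>c<C. ennreal (q c / p c) * R c (snd z) * indicator {xh c} (fst z))"

lemma slice_density_measurable:
  assumes "\<And>c. c < C \<Longrightarrow> R c \<in> borel_measurable nu"
  shows "slice_density q p R \<in> borel_measurable (MX \<Otimes>\<^sub>M nu)"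
  unfolding slice_density_def[abs_def]
proof (intro borel_measurable_sum)
  fix c assume "c \<in> {..<C}"
  then have [measurable]: "R c \<in> borel_measurable nu" "{xh c} \<in> sets MX" using assms atom_sets by auto
  show "(\<lambda>z. ennreal (q c / p c) * R c (snd z) * indicator {xh c} (fst z)) \<in> borel_measurable (MX \<Otimes>\<^sub>M nu)"
    by measurable
qed

lemma slice_density_slice: "c < C \<Longrightarrow> slice_density q p R (xh c, y) = ennreal (q c / p c) * R c y"
  unfolding slice_density_def using sum_indicator_atom[of c "\<lambda>c. ennreal (q c / p c) * R c y"] by simp

lemma mixture_eq_density:
  assumes P: "mixture p Pc P" and Q: "mixture q Qc Q"
    and R: "\<And>c. c < C \<Longrightarrow> R c \<in> borel_measurable nu"
    and pos: "\<And>c. c < C \<Longrightarrow> 0 < q c \<Longrightarrow> 0 < p c \<and> Qc c = density (Pc c) (R c)"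
  shows "Q = density P (slice_density q p R)"
proof (rule measure_eqI)
  let ?r = "slice_density q p R"
  have sets: "sets P = sets (MX \<Otimes>\<^sub>M nu)" "sets Q = sets (MX \<Otimes>\<^sub>M nu)"
    using P Q by (auto simp: mixture_def)
  then show "sets Q = sets (density P ?r)" by simp
  fix A assume "A \<in> sets Q"
  then have A[measurable]: "A \<in> sets (MX \<Otimes>\<^sub>M nu)" using sets by simp
  have "emeasure Q A = (\<Sum>c<C. ennreal (q c) * (\<integral>\<^sup>+y. indicator A (xh c, y) \<partial>Qc c))"
    using nn_integral_mixture[OF Q, of "indicator A"] A sets by simp
  also have "\<dots> = (\<Sum>c<C. ennreal (p c) * (\<integral>\<^sup>+y. ?r (xh c, y) * indicator A (xh c, y) \<partial>Pc c))"
  proof (intro sum.cong refl)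
    fix c assume "c \<in> {..<C}"
    then have c: "c < C" by simp
    then have sets_c: "sets (Pc c) = sets nu" using P by (simp add: mixture_def)
    have [measurable]: "(\<lambda>y. indicator A (xh c, y) :: ennreal) \<in> borel_measurable (Pc c)"
      "R c \<in> borel_measurable (Pc c)"
      unfolding measurable_cong_sets[OF sets_c refl] using atom_space[OF c] R[OF c] by measurable
    show "ennreal (q c) * (\<integral>\<^sup>+y. indicator A (xh c, y) \<partial>Qc c)
        = ennreal (p c) * (\<integral>\<^sup>+y. ?r (xh c, y) * indicator A (xh c, y) \<partial>Pc c)"
    proof (cases "q c = 0")
      case False
      then have q: "0 < q c" using Q c by (auto simp: mixture_def)
      then show ?thesis
        using nn_integral_scaled_density[OF pos[OF c q, THEN conjunct2], of "\<lambda>y. indicator A (xh c, y)"]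
          pos[OF c q]
        by (simp add: slice_density_slice[OF c])
    qed (simp add: slice_density_slice[OF c])
  qed
  also have "\<dots> = emeasure (density P ?r) A"
    using nn_integral_mixture[OF P, of "\<lambda>z. ?r z * indicator A z"] A sets slice_density_measurable[OF R]
    by (simp add: emeasure_density measurable_cong_sets[OF sets(1) refl])
  finally show "emeasure Q A = emeasure (density P ?r) A" .
qed

lemma KL_mixture:
  assumes P: "prob_space P" "mixture p Pc P" and Q: "mixture q Qc Q"
    and pos: "\<And>c. c < C \<Longrightarrow> 0 < q c \<Longrightarrow> 0 < p c \<and> absolutely_continuous (Pc c) (Qc c)"
  shows "KL Q P = ereal (\<Sum>c<C. q c * ln (q c / p c)) + (\<Sum>c<C. ereal (q c) * KL (Qc c) (Pc c))"
proof -
  define R where "R c = RN_deriv (Pc c) (Qc c)" for c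
  have R: "R c \<in> borel_measurable nu" if "c < C" for c
    using P that unfolding R_def mixture_def by (metis borel_measurable_RN_deriv measurable_cong_sets)
  have Qc_eq: "Qc c = density (Pc c) (R c)" if "c < C" "0 < q c" for c
    using pos[OF that] P Q \<open>c < C\<close> unfolding R_def mixture_def
    by (simp add: sigma_finite_measure.density_RN_deriv[OF prob_space_imp_sigma_finite])
  define r where "r = slice_density q p R"
  have Q_eq: "Q = density P r"
    unfolding r_def using pos Qc_eq by (intro mixture_eq_density[OF P(2) Q R]) auto
  have r[measurable]: "r \<in> borel_measurable (MX \<Otimes>\<^sub>M nu)"
    unfolding r_def by (rule slice_density_measurable[OF R])
  have sets: "sets Q = sets P" "sets P = sets (MX \<Otimes>\<^sub>M nu)" using P Q by (auto simp: mixture_def)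
  have rP: "r \<in> borel_measurable P" unfolding measurable_cong_sets[OF sets(2) refl] by (rule r)
  have "KL Q P = ereal_integral Q (\<lambda>z. ln (enn2real (r z)))"
    by (rule KL_density[OF P(1) sets(1) rP Q_eq])
  also have "\<dots> = (\<Sum>c<C. ereal (q c) * ereal_integral (Qc c) (\<lambda>y. ln (enn2real (r (xh c, y)))))"
    using nn_integral_neg_ln_density_le_1[OF P(1) rP] Q_eq
    by (intro ereal_integral_mixture[OF Q]) (auto simp: top_unique)
  also have "\<dots> = (\<Sum>c<C. ereal (q c) * (ereal (ln (q c / p c)) + KL (Qc c) (Pc c)))"
  proof (intro sum.cong refl)
    fix c assume "c \<in> {..<C}"
    then have c: "c < C" by simp
    show "ereal (q c) * ereal_integral (Qc c) (\<lambda>y. ln (enn2real (r (xh c, y))))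
        = ereal (q c) * (ereal (ln (q c / p c)) + KL (Qc c) (Pc c))"
    proof (cases "q c = 0")
      case False
      then have q: "0 < q c" using Q c by (auto simp: mixture_def)
      have "prob_space (Pc c)" "prob_space (Qc c)" "sets (Qc c) = sets (Pc c)"
        and "R c \<in> borel_measurable (Pc c)"
        using P Q c R[OF c] by (auto simp: mixture_def measurable_cong_sets[of "Pc c" nu])
      then show ?thesis
        using ereal_integral_ln_scaled_density[OF _ _ _ _ Qc_eq[OF c q]] pos[OF c q] q
        by (simp add: r_def slice_density_slice[OF c])
    qed (simp add: zero_ereal_def[symmetric])
  qed
  also have "\<dots> = ereal (\<Sum>c<C. q c * ln (q c / p c)) + (\<Sum>c<C. ereal (q c) * KL (Qc c) (Pc c))"
    by (simp add: ereal_distrib_left sum.distrib)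
  finally show ?thesis .
qed

lemma mixtureI:
  assumes M: "prob_space M" "sets M = sets (MX \<Otimes>\<^sub>M nu)"
    and Mc: "\<And>c. c < C \<Longrightarrow> prob_space (Mc c)" "\<And>c. c < C \<Longrightarrow> sets (Mc c) = sets nu"
    and q: "\<And>c. c < C \<Longrightarrow> 0 \<le> q c" "(\<Sum>c<C. q c) = 1"
    and slice: "\<And>c A. c < C \<Longrightarrow> A \<in> sets nu \<Longrightarrow> measure M ({xh c} \<times> A) = q c * measure (Mc c) A"
  shows "mixture q Mc M"
proof -
  have slice': "emeasure M ({xh c} \<times> A) = ennreal (q c) * emeasure (Mc c) A"
    if "c < C" "A \<in> sets nu" for c A
    using slice[OF that] q(1)[OF that(1)] slice_sets[OF that] M Mc that
    by (simp add: prob_space_emeasure_eq_measure ennreal_mult)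
  have "(\<Sum>c<C. emeasure M ({xh c} \<times> space nu)) = (\<Sum>c<C. ennreal (q c))"
  proof (intro sum.cong refl)
    fix c assume "c \<in> {..<C}"
    then have "emeasure (Mc c) (space nu) = 1"
      using Mc prob_space.emeasure_space_1 sets_eq_imp_space_eq by (metis lessThan_iff)
    then show "emeasure M ({xh c} \<times> space nu) = ennreal (q c)"
      using \<open>c \<in> {..<C}\<close> by (simp add: slice')
  qed
  also have "\<dots> = 1" using q by (subst sum_ennreal) auto
  finally have "AE z in M. fst z \<in> xh ` {..<C}" using AE_slices_iff[OF M] by simp
  then show ?thesis using M Mc q slice' unfolding mixture_def by simp
qed

lemma atomic_marginal:
  assumes M: "prob_space M" "mixture q Mc M"
  shows "atomic q (distr M MX fst)"
proof -
  have sets: "sets M = sets (MX \<Otimes>\<^sub>M nu)" using M by (simp add: mixture_def)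
  have fst: "fst \<in> measurable M MX" by (subst measurable_cong_sets[OF sets refl]) simp
  have "emeasure (distr M MX fst) {xh c} = ennreal (q c)" if c: "c < C" for c
  proof -
    have "fst -` {xh c} \<inter> space M = {xh c} \<times> space nu"
      using atom_space[OF c] by (auto simp: sets_eq_imp_space_eq[OF sets] space_pair_measure)
    moreover have "emeasure (Mc c) (space nu) = 1"
      using M c prob_space.emeasure_space_1 sets_eq_imp_space_eq unfolding mixture_def by metis
    moreover have "emeasure M ({xh c} \<times> space nu) = ennreal (q c) * emeasure (Mc c) (space nu)"
      using M c by (simp add: mixture_def)
    ultimately show ?thesis by (simp add: emeasure_distr[OF fst atom_sets[OF c]])
  qed
  moreover have "AE x in distr M MX fst. x \<in> xh ` {..<C}"
  proof (subst AE_distr_iff[OF fst])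
    have "{x \<in> space MX. x \<in> xh ` {..<C}} = (\<Union>c<C. {xh c})" using atom_space by auto
    then show "{x \<in> space MX. x \<in> xh ` {..<C}} \<in> sets MX" using atom_sets by auto
    show "AE z in M. fst z \<in> xh ` {..<C}" using M by (simp add: mixture_def)
  qed
  moreover have "\<And>c. c < C \<Longrightarrow> 0 \<le> q c" using M by (simp add: mixture_def)
  ultimately show ?thesis unfolding atomic_def by simp
qed

end

section \<open>Balls around the nominal distribution\<close>

locale nominal_distribution = finite_atoms MX nu C xh
  for MX :: "'x measure" and nu :: "'y measure" and C :: nat and xh :: "nat \<Rightarrow> 'x" +
  fixes h :: "'y \<Rightarrow> real" and T :: "'y \<Rightarrow> 'p::euclidean_space"
    and ph :: "nat \<Rightarrow> real" and \<theta>h :: "nat \<Rightarrow> 'p" and Ph :: "('x \<times> 'y) measure"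
  assumes regular: "regular_expfam nu h T"
    and \<theta>h_in: "\<And>c. c < C \<Longrightarrow> \<theta>h c \<in> Theta nu h T"
    and Ph_prob: "prob_space Ph"
    and Ph_mixture: "mixture ph (\<lambda>c. expfam_dist nu h T (\<theta>h c)) Ph"
begin

abbreviation fam :: "'p \<Rightarrow> 'y measure" where
  "fam \<theta> \<equiv> expfam_dist nu h T \<theta>"

abbreviation PX :: "'x measure" where
  "PX \<equiv> distr Ph MX fst"

text \<open>Condition (i) says nothing about the mass that \<open>Q\<close> and \<open>QX\<close> put outside the atoms;
  concentration on the atoms comes from absolute continuity w.r.t. \<open>Ph\<close> or \<open>PX\<close>.\<close>

definition decomposes :: "('x \<times> 'y) measure \<Rightarrow> 'x measure \<Rightarrow> (nat \<Rightarrow> 'p) \<Rightarrow> bool" where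
  "decomposes Q QX \<theta> \<longleftrightarrow> prob_space Q \<and> sets Q = sets (MX \<Otimes>\<^sub>M nu) \<and>
     prob_space QX \<and> sets QX = sets MX \<and> (\<forall>c<C. \<theta> c \<in> Theta nu h T) \<and>
     cond_decomp MX nu h T C xh Q QX \<theta>"

lemma mem_KLball_iff:
  "Q \<in> KLball MX nu h T C xh Ph \<epsilon> \<longleftrightarrow> (\<exists>QX \<theta>. decomposes Q QX \<theta> \<and> KL Q Ph \<le> ereal \<epsilon>)"
  unfolding KLball_def decomposes_def by blast

lemma mem_Bball_iff:
  "Q \<in> Bball MX nu h T C xh Ph \<theta>h \<epsilon> \<rho> \<longleftrightarrow>
     (\<exists>QX \<theta>. decomposes Q QX \<theta> \<and> (\<forall>c<C. KL (fam (\<theta> c)) (fam (\<theta>h c)) \<le> ereal (\<rho> c)) \<and>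
        KL QX PX + ereal (\<Sum>c<C. \<rho> c * measure QX {xh c}) \<le> ereal \<epsilon>)"
  unfolding Bball_def decomposes_def by blast

lemma PX_prob: "prob_space PX"
  using Ph_mixture Ph_prob by (intro prob_space.prob_space_distr)
    (auto simp: mixture_def measurable_cong_sets[of Ph "MX \<Otimes>\<^sub>M nu"])

lemma PX_atomic: "atomic ph PX"
  by (rule atomic_marginal[OF Ph_prob Ph_mixture])

lemma decomposes_slice:
  assumes "decomposes Q QX \<theta>" "c < C" "A \<in> sets nu"
  shows "measure Q ({xh c} \<times> A) = measure QX {xh c} * measure (fam (\<theta> c)) A"
  using assms unfolding decomposes_def cond_decomp_def measure_def by (simp add: enn2real_mult)

lemma decomposes_mixture:
  assumes dec: "decomposes Q QX \<theta>" and AE: "AE x in QX. x \<in> xh ` {..<C}"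
  shows "atomic (\<lambda>c. measure QX {xh c}) QX"
    and "mixture (\<lambda>c. measure QX {xh c}) (\<lambda>c. fam (\<theta> c)) Q"
proof -
  have QX: "prob_space QX" "sets QX = sets MX" using dec by (auto simp: decomposes_def)
  then show "atomic (\<lambda>c. measure QX {xh c}) QX"
    using AE by (simp add: atomic_def prob_space_emeasure_eq_measure)
  have "(\<Sum>c<C. ennreal (measure QX {xh c})) = 1"
    using AE AE_atoms_iff[OF QX] QX by (simp add: prob_space_emeasure_eq_measure)
  then have "(\<Sum>c<C. measure QX {xh c}) = 1" by simp
  then show "mixture (\<lambda>c. measure QX {xh c}) (\<lambda>c. fam (\<theta> c)) Q"
  proof (rule mixtureI[rotated 5])
    show "prob_space Q" "sets Q = sets (MX \<Otimes>\<^sub>M nu)" using dec by (simp_all add: decomposes_def)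
    show "prob_space (fam (\<theta> c))" if "c < C" for c
      using dec that by (intro prob_space_expfam_dist[OF regular]) (simp add: decomposes_def)
  qed (simp_all add: decomposes_slice[OF dec])
qed

lemma decomposes_AE_atoms:
  assumes dec: "decomposes Q QX \<theta>" and AE: "AE z in Q. fst z \<in> xh ` {..<C}"
  shows "AE x in QX. x \<in> xh ` {..<C}"
proof -
  have Q: "prob_space Q" "sets Q = sets (MX \<Otimes>\<^sub>M nu)" and QX: "prob_space QX" "sets QX = sets MX"
    using dec by (auto simp: decomposes_def)
  have "measure Q ({xh c} \<times> space nu) = measure QX {xh c}" if c: "c < C" for c
  proof -
    have "prob_space (fam (\<theta> c))"
      using dec c by (intro prob_space_expfam_dist[OF regular]) (auto simp: decomposes_def)
    then have "measure (fam (\<theta> c)) (space nu) = 1" using prob_space.prob_space by fastforce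
    then show ?thesis using decomposes_slice[OF dec c] by simp
  qed
  then have "(\<Sum>c<C. emeasure QX {xh c}) = (\<Sum>c<C. emeasure Q ({xh c} \<times> space nu))"
    using Q QX by (simp add: prob_space_emeasure_eq_measure)
  also have "\<dots> = 1" using AE AE_slices_iff[OF Q] by blast
  finally show ?thesis using AE_atoms_iff[OF QX] by blast
qed

lemma KL_chain_rule:
  assumes dec: "decomposes Q QX \<theta>" and AE: "AE x in QX. x \<in> xh ` {..<C}"
    and pos: "\<And>c. c < C \<Longrightarrow> 0 < measure QX {xh c} \<Longrightarrow>
                0 < ph c \<and> absolutely_continuous (fam (\<theta>h c)) (fam (\<theta> c))"
  shows "KL QX PX = ereal (\<Sum>c<C. measure QX {xh c} * ln (measure QX {xh c} / ph c))"
    and "KL Q Ph = KL QX PX + (\<Sum>c<C. ereal (measure QX {xh c}) * KL (fam (\<theta> c)) (fam (\<theta>h c)))"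
proof -
  show X: "KL QX PX = ereal (\<Sum>c<C. measure QX {xh c} * ln (measure QX {xh c} / ph c))"
    using pos by (intro KL_atomic[OF PX_prob PX_atomic decomposes_mixture(1)[OF dec AE]]) blast
  show "KL Q Ph = KL QX PX + (\<Sum>c<C. ereal (measure QX {xh c}) * KL (fam (\<theta> c)) (fam (\<theta>h c)))"
    unfolding X by (rule KL_mixture[OF Ph_prob Ph_mixture decomposes_mixture(2)[OF dec AE] pos])
qed

lemma decomposes_abs_cont:
  assumes dec: "decomposes Q QX \<theta>" and ac: "absolutely_continuous Ph Q"
    and c: "c < C" and q: "0 < measure QX {xh c}"
  shows "0 < ph c" and "absolutely_continuous (fam (\<theta>h c)) (fam (\<theta> c))"
proof -
  have Q_slice: "emeasure Q ({xh c} \<times> A) = ennreal (measure QX {xh c}) * emeasure (fam (\<theta> c)) A"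
    if "A \<in> sets nu" for A
    using dec c that prob_space_emeasure_eq_measure[of QX "{xh c}"]
    unfolding decomposes_def cond_decomp_def by simp
  have Ph_slice: "emeasure Ph ({xh c} \<times> A) = ennreal (ph c) * emeasure (fam (\<theta>h c)) A" if "A \<in> sets nu" for A
    using Ph_mixture c that by (simp add: mixture_def)
  have null: "emeasure Q ({xh c} \<times> A) = 0" if "A \<in> sets nu" "emeasure Ph ({xh c} \<times> A) = 0" for A
    using ac that slice_sets[OF c] Ph_mixture unfolding absolutely_continuous_def mixture_def by auto
  show "0 < ph c"
  proof (rule ccontr)
    assume "\<not> 0 < ph c"
    then have "ph c = 0" using Ph_mixture c by (auto simp: mixture_def)
    then have "emeasure Q ({xh c} \<times> space nu) = 0" using null Ph_slice by simp
    moreover have "emeasure (fam (\<theta> c)) (space nu) = 1"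
      using dec c prob_space.emeasure_space_1[OF prob_space_expfam_dist[OF regular]]
      by (fastforce simp: decomposes_def)
    ultimately show False using Q_slice[of "space nu"] q by simp
  qed
  show "absolutely_continuous (fam (\<theta>h c)) (fam (\<theta> c))"
    unfolding absolutely_continuous_def
  proof
    fix A assume "A \<in> null_sets (fam (\<theta>h c))"
    then have A: "A \<in> sets nu" "emeasure (fam (\<theta>h c)) A = 0" by auto
    then have "emeasure Q ({xh c} \<times> A) = 0" using null Ph_slice by simp
    then have "emeasure (fam (\<theta> c)) A = 0" using Q_slice[OF A(1)] q by simp
    then show "A \<in> null_sets (fam (\<theta> c))" using A by auto
  qed
qed

text \<open>On atoms of \<open>QX\<close>-mass zero condition (i) does not constrain \<open>\<theta> c\<close>; resetting it to
  \<open>\<theta>h c\<close> makes the conditional divergence vanish there, so that a finite \<open>\<rho>\<close> exists.\<close>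

lemma decomposes_reset_null_atoms:
  assumes dec: "decomposes Q QX \<theta>"
  shows "decomposes Q QX (\<lambda>c. if 0 < measure QX {xh c} then \<theta> c else \<theta>h c)"
proof -
  have "emeasure QX {xh c} = 0" if "\<not> 0 < measure QX {xh c}" for c
    using that dec measure_nonneg[of QX "{xh c}"] prob_space_emeasure_eq_measure[of QX "{xh c}"]
    by (simp add: decomposes_def)
  then show ?thesis
    using dec \<theta>h_in unfolding decomposes_def cond_decomp_def by auto
qed

lemma Bball_imp_KLball:
  assumes "Q \<in> Bball MX nu h T C xh Ph \<theta>h \<epsilon> \<rho>"
  shows "Q \<in> KLball MX nu h T C xh Ph \<epsilon>"
proof -
  obtain QX \<theta> where dec: "decomposes Q QX \<theta>"
      and KL_cond: "\<And>c. c < C \<Longrightarrow> KL (fam (\<theta> c)) (fam (\<theta>h c)) \<le> ereal (\<rho> c)"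
      and KL_le: "KL QX PX + ereal (\<Sum>c<C. \<rho> c * measure QX {xh c}) \<le> ereal \<epsilon>"
    using assms unfolding mem_Bball_iff by blast
  have "KL QX PX \<noteq> \<infinity>" using KL_le by auto
  then have ac: "absolutely_continuous PX QX" and sets: "sets QX = sets PX"
    by (auto dest: KL_finiteD)
  have AE: "AE x in QX. x \<in> xh ` {..<C}"
    using PX_atomic absolutely_continuous_AE[OF sets ac] by (simp add: atomic_def)
  have pos: "0 < ph c \<and> absolutely_continuous (fam (\<theta>h c)) (fam (\<theta> c))"
    if c: "c < C" and q: "0 < measure QX {xh c}" for c
  proof
    show "0 < ph c"
    proof (rule ccontr)
      assume "\<not> 0 < ph c"
      then have "ph c = 0" using PX_atomic c by (force simp: atomic_def)
      then have "emeasure PX {xh c} = 0" using PX_atomic c by (simp add: atomic_def)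
      moreover have "{xh c} \<in> sets PX" using atom_sets[OF c] by simp
      ultimately have "{xh c} \<in> null_sets QX"
        using ac unfolding absolutely_continuous_def by blast
      then have "emeasure QX {xh c} = 0" by (rule null_setsD1)
      then show False using q by (simp add: measure_def)
    qed
    have "KL (fam (\<theta> c)) (fam (\<theta>h c)) \<noteq> \<infinity>" using KL_cond[OF c] by auto
    then show "absolutely_continuous (fam (\<theta>h c)) (fam (\<theta> c))" by (rule KL_finiteD)
  qed
  have "KL Q Ph = KL QX PX + (\<Sum>c<C. ereal (measure QX {xh c}) * KL (fam (\<theta> c)) (fam (\<theta>h c)))"
    by (rule KL_chain_rule(2)[OF dec AE pos])
  also have "\<dots> \<le> KL QX PX + (\<Sum>c<C. ereal (measure QX {xh c}) * ereal (\<rho> c))"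
    using KL_cond by (intro add_left_mono sum_mono ereal_mult_left_mono) auto
  also have "\<dots> = KL QX PX + ereal (\<Sum>c<C. \<rho> c * measure QX {xh c})"
    by (simp add: mult.commute)
  finally have "KL Q Ph \<le> ereal \<epsilon>" using KL_le by simp
  then show ?thesis using dec unfolding mem_KLball_iff by blast
qed

lemma KL_conditionals_finite:
  assumes dec: "decomposes Q QX \<theta>" and KL_fin: "KL Q Ph \<noteq> \<infinity>"
    and reset: "\<forall>c<C. measure QX {xh c} = 0 \<longrightarrow> \<theta> c = \<theta>h c"
  shows "KL Q Ph = KL QX PX + (\<Sum>c<C. ereal (measure QX {xh c}) * KL (fam (\<theta> c)) (fam (\<theta>h c)))"
    and "\<And>c. c < C \<Longrightarrow> 0 \<le> KL (fam (\<theta> c)) (fam (\<theta>h c)) \<and> KL (fam (\<theta> c)) (fam (\<theta>h c)) \<noteq> \<infinity>"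
proof -
  define q where "q c = measure QX {xh c}" for c
  have ac: "absolutely_continuous Ph Q" and sets: "sets Q = sets Ph"
    using KL_finiteD[OF KL_fin] by auto
  have "AE z in Q. fst z \<in> xh ` {..<C}"
    using Ph_mixture absolutely_continuous_AE[OF sets ac] by (simp add: mixture_def)
  then have AE: "AE x in QX. x \<in> xh ` {..<C}" by (rule decomposes_AE_atoms[OF dec])
  have pos: "0 < ph c \<and> absolutely_continuous (fam (\<theta>h c)) (fam (\<theta> c))"
    if "c < C" "0 < measure QX {xh c}" for c
    using decomposes_abs_cont[OF dec ac that] by blast
  note chain = KL_chain_rule[OF dec AE pos]
  show "KL Q Ph = KL QX PX + (\<Sum>c<C. ereal (measure QX {xh c}) * KL (fam (\<theta> c)) (fam (\<theta>h c)))"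
    by (rule chain(2))
  have KL_null: "KL (fam (\<theta> c)) (fam (\<theta>h c)) = 0" if "c < C" "q c = 0" for c
    using reset that KL_self[OF prob_space_expfam_dist[OF regular \<theta>h_in]] by (simp add: q_def)
  have nonneg: "0 \<le> KL (fam (\<theta> c)) (fam (\<theta>h c))" if c: "c < C" for c
  proof (cases "q c = 0")
    case False
    then have "0 < measure QX {xh c}" using measure_nonneg[of QX "{xh c}"] by (simp add: q_def less_le)
    then show ?thesis
      using pos[OF c] dec c \<theta>h_in[OF c]
      by (intro KL_nonneg prob_space_expfam_dist[OF regular]) (auto simp: decomposes_def)
  qed (simp add: KL_null c)
  have "(\<Sum>c<C. ereal (q c) * KL (fam (\<theta> c)) (fam (\<theta>h c))) \<noteq> \<infinity>"
    using KL_fin chain unfolding q_def by auto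
  then have fin: "ereal (q c) * KL (fam (\<theta> c)) (fam (\<theta>h c)) \<noteq> \<infinity>" if "c < C" for c
    using that nonneg by (subst (asm) sum_Pinfty) (auto simp: q_def)
  show "0 \<le> KL (fam (\<theta> c)) (fam (\<theta>h c)) \<and> KL (fam (\<theta> c)) (fam (\<theta>h c)) \<noteq> \<infinity>"
    if c: "c < C" for c
  proof (cases "q c = 0")
    case False
    then have "0 < q c" using measure_nonneg[of QX "{xh c}"] by (simp add: q_def less_le)
    then show ?thesis using nonneg[OF c] fin[OF c] by auto
  qed (simp add: KL_null c)
qed

lemma KLball_imp_Bball:
  assumes "Q \<in> KLball MX nu h T C xh Ph \<epsilon>"
  shows "\<exists>\<rho>\<in>{\<rho>. \<forall>c<C. 0 \<le> \<rho> c}. Q \<in> Bball MX nu h T C xh Ph \<theta>h \<epsilon> \<rho>"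
proof -
  obtain QX \<theta>0 where dec0: "decomposes Q QX \<theta>0" and KL_le: "KL Q Ph \<le> ereal \<epsilon>"
    using assms unfolding mem_KLball_iff by blast
  define \<theta> where "\<theta> c = (if 0 < measure QX {xh c} then \<theta>0 c else \<theta>h c)" for c
  have dec: "decomposes Q QX \<theta>" unfolding \<theta>_def by (rule decomposes_reset_null_atoms[OF dec0])
  have fin: "KL Q Ph \<noteq> \<infinity>" using KL_le by auto
  have reset: "\<forall>c<C. measure QX {xh c} = 0 \<longrightarrow> \<theta> c = \<theta>h c"
    by (simp add: \<theta>_def)
  note KL_cond = KL_conditionals_finite[OF dec fin reset]
  define \<rho> where "\<rho> c = real_of_ereal (KL (fam (\<theta> c)) (fam (\<theta>h c)))" for c
  have KL_eq: "KL (fam (\<theta> c)) (fam (\<theta>h c)) = ereal (\<rho> c)" if "c < C" for c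
    using KL_cond(2)[OF that] unfolding \<rho>_def \<theta>_def
    by (cases "KL (fam (\<theta> c)) (fam (\<theta>h c))") (auto simp: \<theta>_def)
  have "KL QX PX + ereal (\<Sum>c<C. \<rho> c * measure QX {xh c}) = KL Q Ph"
    using KL_cond(1) KL_eq by (simp add: \<theta>_def mult.commute)
  then have "Q \<in> Bball MX nu h T C xh Ph \<theta>h \<epsilon> \<rho>"
    using dec KL_eq KL_le unfolding mem_Bball_iff by (intro exI[of _ QX] exI[of _ \<theta>]) auto
  moreover have "\<forall>c<C. 0 \<le> \<rho> c" using KL_eq KL_cond(2) by fastforce
  ultimately show ?thesis by blast
qed

end

theorem proposition2p6:
  fixes Xs :: "'x::euclidean_space set" and Ys :: "'y::euclidean_space set"
    and nu :: "'y measure" and h :: "'y \<Rightarrow> real" and T :: "'y \<Rightarrow> 'p::euclidean_space"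
    and C :: nat and xh :: "nat \<Rightarrow> 'x" and ph :: "nat \<Rightarrow> real" and \<theta>h :: "nat \<Rightarrow> 'p"
    and Ph :: "('x \<times> 'y) measure" and \<epsilon> :: real
  defines "MX \<equiv> restrict_space borel Xs"
  assumes nu_sets: "sets nu = sets (restrict_space borel Ys)"
    and reg: "regular_expfam nu h T"
    and xh_in: "\<forall>c<C. xh c \<in> Xs" and xh_distinct: "inj_on xh {..<C}"
    and ph_nonneg: "\<forall>c<C. 0 \<le> ph c" and ph_sum: "(\<Sum>c<C. ph c) = 1"
    and \<theta>h_in: "\<forall>c<C. \<theta>h c \<in> Theta nu h T"
    and Ph_prob: "prob_space Ph" and Ph_sets: "sets Ph = sets (MX \<Otimes>\<^sub>M nu)"
    and Ph_X: "\<forall>A\<in>sets MX. measure (distr Ph MX fst) A = (\<Sum>c\<in>{c. c < C \<and> xh c \<in> A}. ph c)"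
    and Ph_cond: "\<forall>c<C. \<forall>A\<in>sets nu.
                    measure Ph ({xh c} \<times> A) = ph c * measure (expfam_dist nu h T (\<theta>h c)) A"
    and eps: "0 \<le> \<epsilon>"
  shows "KLball MX nu h T C xh Ph \<epsilon> = (\<Union>\<rho>\<in>{\<rho>. \<forall>c<C. 0 \<le> \<rho> c}. Bball MX nu h T C xh Ph \<theta>h \<epsilon> \<rho>)"
proof -
  have atoms: "{xh c} \<in> sets MX" if "c < C" for c
    using xh_in that unfolding MX_def sets_restrict_space by (auto intro!: image_eqI[of _ _ "{xh c}"])
  interpret finite_atoms MX nu C xh
    using atoms xh_distinct by unfold_locales
  have "mixture ph (\<lambda>c. expfam_dist nu h T (\<theta>h c)) Ph"
  proof (rule mixtureI)
    show "prob_space (expfam_dist nu h T (\<theta>h c))" if "c < C" for c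
      using \<theta>h_in that by (intro prob_space_expfam_dist[OF reg]) simp
  qed (use Ph_prob Ph_sets ph_nonneg ph_sum Ph_cond in simp_all)
  then interpret nominal_distribution MX nu C xh h T ph \<theta>h Ph
    using reg \<theta>h_in Ph_prob
    by (intro nominal_distribution.intro finite_atoms_axioms nominal_distribution_axioms.intro) simp_all
  show ?thesis
    by (intro set_eqI iffI) (auto dest: KLball_imp_Bball intro: Bball_imp_KLball)
qed

end
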